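(* Let $\sqsubseteq$ be any of the stochastic simulation pre-orders $\sqsubseteq^S_i$, $\sqsubseteq^S_\pi$, $\sqsubseteq^S_m$. There is no stochastic CA $\mathcal{U}$ such that $\mathcal{B}\sqsubseteq\mathcal{U}$ for every stochastic CA $\mathcal{B}$ (i.e. there is no $\sqsubseteq$-universal stochastic CA).
   Context: A stochastic CA is $(Q,R,V,V',f)$ with $Q$ finite states, $R$ finite random symbols, $V=\{v_1,\dots,v_r\}$, $V'=\{v'_1,\dots,v'_{r'}\}$ finite subsets of $\mathbb{Z}$, $f:Q^r\times R^{r'}\to Q$; explicit global function $F(c,s)_z=f((c_{z+v_1},\dots,c_{z+v_r}),(s_{z+v'_1},\dots,s_{z+v'_{r'}}))$. $\nu_R$ is the uniform Bernoulli measure on $R^{\mathbb{Z}}$; the stochastic global function $S_F(c)$ is the law of $F(c,s)$ for $s\sim\nu_R$. Iterates: $F^0(c)=c$, $F^{t+1}(c,s^1,\dots,s^{t+1})=F(F^t(c,s^1,\dots,s^t),s^{t+1})$. Restriction: for injective $i:Q'\to Q$ with $Y=i(Q')^{\mathbb{Z}}$ satisfying $F(Y,R^{\mathbb{Z}})\subseteq Y$, the $i$-restriction has states $Q'$, random symbols $R$, explicit global function $I^{-1}(F(I(c),s))$ ($I$ the cellwise extension of $i$). Projection: for surjective $\pi:Q\to Q'$ with cellwise extension $\Pi$ such that $\Pi(F(c,s))=\Pi(F(c',s))$ whenever $\Pi(c)=\Pi(c')$, the $\pi$-projection has states $Q'$, random symbols $R$, explicit global function $(c',s)\mapsto\Pi(F(c,s))$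 for any $c\in\Pi^{-1}(c')$. Rescaling with $m,t\ge1,k\in\mathbb{Z}$: $\mathcal{A}^{\langle m,t,k\rangle}$ has states $Q^m$, random symbols $(R^m)^t$, explicit global function $b_m\circ\sigma_k\circ F^t(b_m^{-1}(c),b_m^{-1}(s^1),\dots,b_m^{-1}(s^t))$ where $s^i_j=(s_j)_i$, $\sigma_k(c)_z=c_{z+k}$, $b_m(c)_z=(c_{mz},\dots,c_{mz+m-1})$. $\mathcal{A}_1\sqsubseteq^S_i\mathcal{A}_2$ (resp. $\sqsubseteq^S_\pi$, $\sqsubseteq^S_m$) iff there are $m_1,m_2,t_1,t_2,k_1,k_2$ such that $\mathcal{A}_1^{\langle m_1,t_1,k_1\rangle}$ has the same stochastic global function as some $i$-restriction (resp. some $\pi$-projection, resp. some $\pi$-projection of some $i$-restriction) of $\mathcal{A}_2^{\langle m_2,t_2,k_2\rangle}$. *)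

theory Defs
  imports "HOL-Probability.Probability"
begin

text \<open>A stochastic CA (Q,R,V,V',f), with Q and R given as finite carrier sets
inside arbitrary types, V and V' as lists v_1..v_r and v'_1..v'_r'.\<close>

record ('q, 'r) sca =
  states :: "'q set"
  rsyms  :: "'r set"
  nbhd   :: "int list"
  rnbhd  :: "int list"
  rule   :: "'q list \<Rightarrow> 'r list \<Rightarrow> 'q"

definition wf_sca :: "('q, 'r) sca \<Rightarrow> bool" where
  "wf_sca A \<longleftrightarrow> finite (states A) \<and> states A \<noteq> {} \<and>
     finite (rsyms A) \<and> rsyms A \<noteq> {} \<and>
     distinct (nbhd A) \<and> distinct (rnbhd A) \<and>
     (\<forall>xs ys. length xs = length (nbhd A) \<and> set xs \<subseteq> states A \<and>
              length ys = length (rnbhd A) \<and> set ys \<subseteq> rsyms A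
              \<longrightarrow> rule A xs ys \<in> states A)"

record ('q, 'r) gca =
  gstates :: "'q set"
  grsyms  :: "'r set"
  glob    :: "(int \<Rightarrow> 'q) \<Rightarrow> (int \<Rightarrow> 'r) \<Rightarrow> (int \<Rightarrow> 'q)"

definition global_fun :: "('q, 'r) sca \<Rightarrow> (int \<Rightarrow> 'q) \<Rightarrow> (int \<Rightarrow> 'r) \<Rightarrow> (int \<Rightarrow> 'q)" where
  "global_fun A c s = (\<lambda>z. rule A (map (\<lambda>v. c (z + v)) (nbhd A)) (map (\<lambda>v. s (z + v)) (rnbhd A)))"

definition to_gca :: "('q, 'r) sca \<Rightarrow> ('q, 'r) gca" where
  "to_gca A = \<lparr>gstates = states A, grsyms = rsyms A, glob = global_fun A\<rparr>"

definition cfgs :: "'q set \<Rightarrow> (int \<Rightarrow> 'q) set" where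
  "cfgs Q = {c. \<forall>z. c z \<in> Q}"

definition bernoulli_meas :: "'r set \<Rightarrow> (int \<Rightarrow> 'r) measure" where
  "bernoulli_meas R = PiM UNIV (\<lambda>_. uniform_count_measure R)"

definition stoch :: "('q, 'r) gca \<Rightarrow> (int \<Rightarrow> 'q) \<Rightarrow> (int \<Rightarrow> 'q) measure" where
  "stoch A c = distr (bernoulli_meas (grsyms A)) (PiM UNIV (\<lambda>_. count_space (gstates A))) (glob A c)"

definition same_stoch :: "('q, 'r) gca \<Rightarrow> ('q, 'r2) gca \<Rightarrow> bool" where
  "same_stoch A B \<longleftrightarrow> gstates A = gstates B \<and> (\<forall>c \<in> cfgs (gstates A). stoch A c = stoch B c)"

definition iter_glob :: "((int \<Rightarrow> 'q) \<Rightarrow> (int \<Rightarrow> 'r) \<Rightarrow> (int \<Rightarrow> 'q)) \<Rightarrow> (int \<Rightarrow> 'q) \<Rightarrow> (int \<Rightarrow> 'r) list \<Rightarrow> (int \<Rightarrow> 'q)" where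
  "iter_glob F c ss = foldl F c ss"

definition shift :: "int \<Rightarrow> (int \<Rightarrow> 'a) \<Rightarrow> (int \<Rightarrow> 'a)" where
  "shift k c = (\<lambda>z. c (z + k))"

definition bloc :: "nat \<Rightarrow> (int \<Rightarrow> 'a) \<Rightarrow> (int \<Rightarrow> 'a list)" where
  "bloc m c = (\<lambda>z. map (\<lambda>j. c (int m * z + int j)) [0..<m])"

definition unbloc :: "nat \<Rightarrow> (int \<Rightarrow> 'a list) \<Rightarrow> (int \<Rightarrow> 'a)" where
  "unbloc m c = (\<lambda>z. c (z div int m) ! nat (z mod int m))"

text \<open>Rescaling A^<m,t,k>: states Q^m, random symbols (R^m)^t.  A random configuration
s of (R^m)^t gives s^i with s^i_j = (s_j)_i (list index i-1 for i = 1..t).\<close>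

definition rescale :: "('q, 'r) sca \<Rightarrow> nat \<Rightarrow> nat \<Rightarrow> int \<Rightarrow> ('q list, 'r list list) gca" where
  "rescale A m t k =
     \<lparr>gstates = {xs. length xs = m \<and> set xs \<subseteq> states A},
      grsyms = {ys. length ys = t \<and> (\<forall>y \<in> set ys. length y = m \<and> set y \<subseteq> rsyms A)},
      glob = (\<lambda>c s. bloc m (shift k (iter_glob (global_fun A) (unbloc m c)
                      (map (\<lambda>i. unbloc m (\<lambda>j. s j ! i)) [0..<t]))))\<rparr>"

definition is_restr :: "('q, 'r) gca \<Rightarrow> 'e set \<Rightarrow> ('e \<Rightarrow> 'q) \<Rightarrow> bool" where
  "is_restr A Q' i \<longleftrightarrow> inj_on i Q' \<and> i ` Q' \<subseteq> gstates A \<and>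
     (\<forall>c \<in> cfgs (i ` Q'). \<forall>s \<in> cfgs (grsyms A). glob A c s \<in> cfgs (i ` Q'))"

definition restr :: "('q, 'r) gca \<Rightarrow> 'e set \<Rightarrow> ('e \<Rightarrow> 'q) \<Rightarrow> ('e, 'r) gca" where
  "restr A Q' i = \<lparr>gstates = Q', grsyms = grsyms A,
     glob = (\<lambda>c s. the_inv_into Q' i \<circ> glob A (i \<circ> c) s)\<rparr>"

definition is_proj :: "('q, 'r) gca \<Rightarrow> 'e set \<Rightarrow> ('q \<Rightarrow> 'e) \<Rightarrow> bool" where
  "is_proj A Q' p \<longleftrightarrow> p ` gstates A = Q' \<and>
     (\<forall>c \<in> cfgs (gstates A). \<forall>c' \<in> cfgs (gstates A). \<forall>s \<in> cfgs (grsyms A).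
        p \<circ> c = p \<circ> c' \<longrightarrow> p \<circ> glob A c s = p \<circ> glob A c' s)"

definition proj :: "('q, 'r) gca \<Rightarrow> ('q \<Rightarrow> 'e) \<Rightarrow> ('e, 'r) gca" where
  "proj A p = \<lparr>gstates = p ` gstates A, grsyms = grsyms A,
     glob = (\<lambda>c' s. p \<circ> glob A (SOME c. c \<in> cfgs (gstates A) \<and> p \<circ> c = c') s)\<rparr>"

definition sim_i :: "('a, 'b) sca \<Rightarrow> ('c, 'd) sca \<Rightarrow> bool" where
  "sim_i A1 A2 \<longleftrightarrow> (\<exists>m1 m2 t1 t2 k1 k2. m1 \<ge> 1 \<and> m2 \<ge> 1 \<and> t1 \<ge> 1 \<and> t2 \<ge> 1 \<and>
     (\<exists>i :: 'a list \<Rightarrow> 'c list.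
        is_restr (rescale A2 m2 t2 k2) (gstates (rescale A1 m1 t1 k1)) i \<and>
        same_stoch (rescale A1 m1 t1 k1)
                   (restr (rescale A2 m2 t2 k2) (gstates (rescale A1 m1 t1 k1)) i)))"

definition sim_pi :: "('a, 'b) sca \<Rightarrow> ('c, 'd) sca \<Rightarrow> bool" where
  "sim_pi A1 A2 \<longleftrightarrow> (\<exists>m1 m2 t1 t2 k1 k2. m1 \<ge> 1 \<and> m2 \<ge> 1 \<and> t1 \<ge> 1 \<and> t2 \<ge> 1 \<and>
     (\<exists>p :: 'c list \<Rightarrow> 'a list.
        is_proj (rescale A2 m2 t2 k2) (gstates (rescale A1 m1 t1 k1)) p \<and>
        same_stoch (rescale A1 m1 t1 k1) (proj (rescale A2 m2 t2 k2) p)))"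

definition sim_m :: "('a, 'b) sca \<Rightarrow> ('c, 'd) sca \<Rightarrow> bool" where
  "sim_m A1 A2 \<longleftrightarrow> (\<exists>m1 m2 t1 t2 k1 k2. m1 \<ge> 1 \<and> m2 \<ge> 1 \<and> t1 \<ge> 1 \<and> t2 \<ge> 1 \<and>
     (\<exists>(Q' :: 'c list set) (i :: 'c list \<Rightarrow> 'c list) (p :: 'c list \<Rightarrow> 'a list).
        is_restr (rescale A2 m2 t2 k2) Q' i \<and>
        is_proj (restr (rescale A2 m2 t2 k2) Q' i) (gstates (rescale A1 m1 t1 k1)) p \<and>
        same_stoch (rescale A1 m1 t1 k1) (proj (restr (rescale A2 m2 t2 k2) Q' i) p)))"

end

theory Submission
  imports Defs
begin

text \<open>Every cell of a rescaled stochastic CA depends on finitely many random symbols, each uniform over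
an alphabet of size \<open>(r\<^sup>m)\<^sup>t\<close> when \<open>r\<close> is the number of random symbols of the original CA; restrictions and
projections keep this property. Hence the probability that cell 0 takes a given value is a fraction
whose denominator is a power of \<open>r\<close>. The CA that writes into each cell a fresh uniform symbol out of
\<open>r + 1\<close> produces such probabilities strictly between 0 and 1 with denominators powers of \<open>r + 1\<close>.
A fraction admitting denominators that are powers of coprime numbers is an integer, so no CA with
\<open>r\<close> random symbols can simulate that one.\<close>

section \<open>Cylinder sets of the Bernoulli measure\<close>

lemma space_bernoulli_meas: "space (bernoulli_meas R) = {s. \<forall>z. s z \<in> R}"
  by (auto simp: bernoulli_meas_def space_PiM PiE_def extensional_def space_uniform_count_measure)

lemma PiM_uniform_count_measure_singleton:
  assumes R: "finite R" "R \<noteq> {}" and J: "finite J" and t: "t \<in> PiE J (\<lambda>_. R)"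
  shows "{t} \<in> sets (PiM J (\<lambda>_. uniform_count_measure R))"
    and "emeasure (PiM J (\<lambda>_. uniform_count_measure R)) {t} = ennreal ((1 / real (card R)) ^ card J)"
proof -
  let ?M = "\<lambda>_. uniform_count_measure R"
  interpret M: prob_space "?M i" for i using prob_space_uniform_count_measure[OF R] .
  interpret P: product_prob_space ?M J by unfold_locales
  have single: "{t} = PiE J (\<lambda>j. {t j})"
    using t by (simp add: PiE_singleton PiE_iff)
  have tR: "\<And>j. j \<in> J \<Longrightarrow> {t j} \<in> sets (?M j)"
    using t by (auto simp: sets_uniform_count_measure)
  show "{t} \<in> sets (PiM J ?M)"
    unfolding single by (rule sets_PiM_I_finite[OF J tR])
  have "emeasure (PiM J ?M) {t} = (\<Prod>j\<in>J. emeasure (?M j) {t j})"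
    unfolding single by (rule P.emeasure_PiM[OF J tR])
  also have "\<dots> = (\<Prod>j\<in>J. ennreal (1 / real (card R)))"
    using t R by (intro prod.cong refl) (auto simp: emeasure_uniform_count_measure PiE_iff)
  finally show "emeasure (PiM J ?M) {t} = ennreal ((1 / real (card R)) ^ card J)"
    by (simp add: prod_ennreal ennreal_power)
qed

lemma bernoulli_meas_eq_prod_emb:
  assumes S: "S \<subseteq> space (bernoulli_meas R)"
    and det: "\<And>s s'. s \<in> S \<Longrightarrow> s' \<in> space (bernoulli_meas R) \<Longrightarrow> (\<forall>j\<in>J. s j = s' j) \<Longrightarrow> s' \<in> S"
  shows "S = prod_emb UNIV (\<lambda>_. uniform_count_measure R) J ((\<lambda>s. restrict s J) ` S)"
proof
  show "S \<subseteq> prod_emb UNIV (\<lambda>_. uniform_count_measure R) J ((\<lambda>s. restrict s J) ` S)"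
    using S unfolding prod_emb_def
    by (auto simp: space_bernoulli_meas space_uniform_count_measure PiE_def extensional_def)
  show "prod_emb UNIV (\<lambda>_. uniform_count_measure R) J ((\<lambda>s. restrict s J) ` S) \<subseteq> S"
  proof
    fix s' assume "s' \<in> prod_emb UNIV (\<lambda>_. uniform_count_measure R) J ((\<lambda>s. restrict s J) ` S)"
    then obtain s where "s \<in> S" "restrict s' J = restrict s J" "s' \<in> space (bernoulli_meas R)"
      unfolding prod_emb_def by (auto simp: space_bernoulli_meas space_uniform_count_measure PiE_def)
    then show "s' \<in> S" using det by (metis restrict_apply')
  qed
qed

lemma bernoulli_meas_cylinder:
  assumes R: "finite R" "R \<noteq> {}" and J: "finite J"
    and S: "S \<subseteq> space (bernoulli_meas R)"
    and det: "\<And>s s'. s \<in> S \<Longrightarrow> s' \<in> space (bernoulli_meas R) \<Longrightarrow> (\<forall>j\<in>J. s j = s' j) \<Longrightarrow> s' \<in> S"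
  shows "S \<in> sets (bernoulli_meas R)"
    and "measure (bernoulli_meas R) S = real (card ((\<lambda>s. restrict s J) ` S)) / real (card R) ^ card J"
proof -
  let ?M = "\<lambda>_::int. uniform_count_measure R"
  interpret M: prob_space "?M i" for i using prob_space_uniform_count_measure[OF R] .
  interpret P: product_prob_space ?M UNIV by unfold_locales
  define T where "T = (\<lambda>s. restrict s J) ` S"
  have TP: "T \<subseteq> PiE J (\<lambda>_. R)"
    using S unfolding T_def by (auto simp: space_bernoulli_meas)
  have finT: "finite T"
    using TP finite_PiE[OF J, of "\<lambda>_. R"] R(1) finite_subset by blast
  have Seq: "S = prod_emb UNIV ?M J T"
    unfolding T_def by (rule bernoulli_meas_eq_prod_emb[OF S det])
  have single: "\<And>t. t \<in> T \<Longrightarrow> {t} \<in> sets (PiM J ?M)"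
    using PiM_uniform_count_measure_singleton(1)[OF R J] TP by blast
  have "(\<Union>t\<in>T. {t}) \<in> sets (PiM J ?M)"
    by (rule sets.finite_UN[OF finT single])
  then have Tsets: "T \<in> sets (PiM J ?M)" by simp
  show "S \<in> sets (bernoulli_meas R)"
    unfolding Seq bernoulli_meas_def by (rule measurable_prod_emb[OF subset_UNIV Tsets])
  have "emeasure (bernoulli_meas R) S = emeasure (PiM J ?M) T"
    unfolding Seq bernoulli_meas_def by (rule P.emeasure_PiM_emb'[OF _ J Tsets]) simp
  also have "\<dots> = (\<Sum>t\<in>T. emeasure (PiM J ?M) {t})"
    by (rule emeasure_eq_sum_singleton[OF finT single])
  also have "\<dots> = (\<Sum>t\<in>T. ennreal ((1 / real (card R)) ^ card J))"
    using PiM_uniform_count_measure_singleton(2)[OF R J] TP by (intro sum.cong) auto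
  also have "\<dots> = ennreal (real (card T) * (1 / real (card R)) ^ card J)"
    by (simp add: ennreal_of_nat_eq_real_of_nat ennreal_mult)
  finally have "emeasure (bernoulli_meas R) S = ennreal (real (card T) / real (card R) ^ card J)"
    by (simp add: power_divide)
  then show "measure (bernoulli_meas R) S = real (card T) / real (card R) ^ card J"
    unfolding T_def measure_def by simp
qed

lemma bernoulli_meas_cylinder_strict:
  assumes R: "finite R" "R \<noteq> {}" and J: "finite J"
    and S: "S \<subseteq> space (bernoulli_meas R)"
    and det: "\<And>s s'. s \<in> S \<Longrightarrow> s' \<in> space (bernoulli_meas R) \<Longrightarrow> (\<forall>j\<in>J. s j = s' j) \<Longrightarrow> s' \<in> S"
    and s\<^sub>0: "s\<^sub>0 \<in> S" and s\<^sub>1: "s\<^sub>1 \<in> space (bernoulli_meas R) - S"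
  shows "0 < measure (bernoulli_meas R) S" and "measure (bernoulli_meas R) S < 1"
proof -
  define T where "T = (\<lambda>s. restrict s J) ` S"
  have TPi: "T \<subseteq> PiE J (\<lambda>_. R)"
    using S unfolding T_def by (auto simp: space_bernoulli_meas)
  have finPi: "finite (PiE J (\<lambda>_. R))"
    using R(1) J by (simp add: finite_PiE)
  have cardR: "0 < card R" using R by (simp add: card_gt_0_iff)
  have measS: "measure (bernoulli_meas R) S = real (card T) / real (card R) ^ card J"
    unfolding T_def by (rule bernoulli_meas_cylinder(2)[OF R J S det])
  have "restrict s\<^sub>0 J \<in> T" using s\<^sub>0 unfolding T_def by blast
  then have "0 < card T"
    using finite_subset[OF TPi finPi] by (auto simp: card_gt_0_iff)
  then show "0 < measure (bernoulli_meas R) S"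
    unfolding measS using cardR by simp
  have "restrict s\<^sub>1 J \<notin> T"
    using s\<^sub>1 det unfolding T_def by (auto simp: restrict_def fun_eq_iff split: if_splits)
  moreover have "restrict s\<^sub>1 J \<in> PiE J (\<lambda>_. R)"
    using s\<^sub>1 by (auto simp: space_bernoulli_meas)
  ultimately have "card T < card (PiE J (\<lambda>_. R))"
    using TPi finPi by (intro psubset_card_mono) auto
  then have "card T < card R ^ card J" using J by (simp add: card_PiE)
  then show "measure (bernoulli_meas R) S < 1"
    unfolding measS using cardR by (simp add: divide_less_eq)
qed

section \<open>Finitary global functions\<close>

definition closed_gca :: "('q, 'r) gca \<Rightarrow> bool" where
  "closed_gca G \<longleftrightarrow> (\<forall>c\<in>cfgs (gstates G). \<forall>s\<in>cfgs (grsyms G). glob G c s \<in> cfgs (gstates G))"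

definition local_gca :: "('q, 'r) gca \<Rightarrow> bool" where
  "local_gca G \<longleftrightarrow>
     (\<forall>c z. \<exists>J. finite J \<and> (\<forall>s s'. (\<forall>j\<in>J. s j = s' j) \<longrightarrow> glob G c s z = glob G c s' z))"

definition finitary_gca :: "('q, 'r) gca \<Rightarrow> bool" where
  "finitary_gca G \<longleftrightarrow> finite (gstates G) \<and> finite (grsyms G) \<and> grsyms G \<noteq> {} \<and>
     closed_gca G \<and> local_gca G"

lemma local_gca_comp:
  assumes "local_gca G" and "\<And>c s. glob H c s = \<phi> \<circ> glob G (g c) s"
  shows "local_gca H"
  unfolding local_gca_def
proof (intro allI)
  fix c z
  obtain J where J: "finite J" "\<forall>s s'. (\<forall>j\<in>J. s j = s' j) \<longrightarrow> glob G (g c) s z = glob G (g c) s' z"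
    using assms(1) unfolding local_gca_def by blast
  have "glob H c s z = glob H c s' z" if "\<forall>j\<in>J. s j = s' j" for s s'
  proof -
    have "glob G (g c) s z = glob G (g c) s' z" using J(2) that by blast
    then show ?thesis by (simp add: assms(2))
  qed
  then show "\<exists>J. finite J \<and> (\<forall>s s'. (\<forall>j\<in>J. s j = s' j) \<longrightarrow> glob H c s z = glob H c s' z)"
    using J(1) by blast
qed

definition nbhd_radius :: "('q, 'r) sca \<Rightarrow> int" where
  "nbhd_radius A = Max (insert 0 (abs ` set (nbhd A @ rnbhd A)))"

lemma nbhd_radius_nonneg: "0 \<le> nbhd_radius A"
  unfolding nbhd_radius_def by (rule Max_ge) auto

lemma nbhd_radius_ge: "v \<in> set (nbhd A @ rnbhd A) \<Longrightarrow> \<bar>v\<bar> \<le> nbhd_radius A"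
  unfolding nbhd_radius_def by (rule Max_ge) auto

lemma global_fun_local:
  assumes "\<And>y. \<bar>y - z\<bar> \<le> nbhd_radius A \<Longrightarrow> c y = c' y \<and> s y = s' y"
  shows "global_fun A c s z = global_fun A c' s' z"
proof -
  have "map (\<lambda>v. c (z + v)) (nbhd A) = map (\<lambda>v. c' (z + v)) (nbhd A)"
    and "map (\<lambda>v. s (z + v)) (rnbhd A) = map (\<lambda>v. s' (z + v)) (rnbhd A)"
    using assms nbhd_radius_ge[of _ A] by (auto intro!: map_cong)
  then show ?thesis unfolding global_fun_def by (simp only:)
qed

lemma foldl_local:
  assumes F: "\<And>c c' s s' z. (\<And>y. \<bar>y - z\<bar> \<le> \<rho> \<Longrightarrow> c y = c' y \<and> s y = s' y) \<Longrightarrow> F c s z = F c' s' z"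
    and \<rho>: "0 \<le> \<rho>" and len: "length ss = length ss'"
    and agree: "\<And>y. \<bar>y - z\<bar> \<le> \<rho> * int (length ss) \<Longrightarrow>
                      c y = c' y \<and> (\<forall>i<length ss. (ss ! i) y = (ss' ! i) y)"
  shows "foldl F c ss z = foldl F c' ss' z"
  using len agree
proof (induction ss arbitrary: ss' c c')
  case Nil
  then show ?case by simp
next
  case (Cons x xs)
  then obtain x' xs' where ss': "ss' = x' # xs'" "length xs = length xs'" by (cases ss') auto
  have "foldl F (F c x) xs z = foldl F (F c' x') xs' z"
  proof (rule Cons.IH[OF ss'(2)])
    fix y assume y: "\<bar>y - z\<bar> \<le> \<rho> * int (length xs)"
    have "F c x y = F c' x' y"
    proof (rule F)
      fix y' assume "\<bar>y' - y\<bar> \<le> \<rho>"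
      then have "\<bar>y' - z\<bar> \<le> \<rho> * int (length (x # xs))" using y by (simp add: algebra_simps)
      from Cons.prems(2)[OF this] show "c y' = c' y' \<and> x y' = x' y'"
        using ss' by (auto dest: spec[of _ 0])
    qed
    moreover have "\<bar>y - z\<bar> \<le> \<rho> * int (length (x # xs))" using y \<rho> by (simp add: algebra_simps)
    then have "\<forall>i<length xs. (xs ! i) y = (xs' ! i) y"
      using Cons.prems(2) ss'(1) by (metis Suc_less_eq length_Cons nth_Cons_Suc)
    ultimately show "F c x y = F c' x' y \<and> (\<forall>i<length xs. (xs ! i) y = (xs' ! i) y)" by simp
  qed
  then show ?case using ss' by simp
qed

lemma local_gca_rescale:
  assumes m: "m \<ge> 1"
  shows "local_gca (rescale A m t k)"
  unfolding local_gca_def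
proof (intro allI)
  fix c z
  define \<rho> where "\<rho> = nbhd_radius A"
  define J where "J = (\<lambda>y. y div int m) ` {int m * z + k - \<rho> * int t .. int m * z + k + int m + \<rho> * int t}"
  have "glob (rescale A m t k) c s z = glob (rescale A m t k) c s' z" if st: "\<forall>j\<in>J. s j = s' j" for s s'
  proof -
    let ?ss = "\<lambda>s. map (\<lambda>i. unbloc m (\<lambda>j. s j ! i)) [0..<t]"
    have "foldl (global_fun A) (unbloc m c) (?ss s) (int m * z + int j + k) =
          foldl (global_fun A) (unbloc m c) (?ss s') (int m * z + int j + k)" if j: "j < m" for j
    proof (rule foldl_local[where \<rho>=\<rho>])
      show "global_fun A c1 s1 z1 = global_fun A c1' s1' z1"
        if "\<And>y. \<bar>y - z1\<bar> \<le> \<rho> \<Longrightarrow> c1 y = c1' y \<and> s1 y = s1' y" for c1 c1' s1 s1' z1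
        using that unfolding \<rho>_def by (rule global_fun_local)
      fix y assume "\<bar>y - (int m * z + int j + k)\<bar> \<le> \<rho> * int (length (?ss s))"
      then have "y div int m \<in> J" unfolding J_def using j by (intro imageI) auto
      then show "unbloc m c y = unbloc m c y \<and> (\<forall>i<length (?ss s). (?ss s ! i) y = (?ss s' ! i) y)"
        using st by (simp add: unbloc_def)
    qed (simp_all add: \<rho>_def nbhd_radius_nonneg)
    then show ?thesis
      by (simp add: rescale_def bloc_def shift_def iter_glob_def algebra_simps)
  qed
  moreover have "finite J" unfolding J_def by simp
  ultimately show "\<exists>J. finite J \<and> (\<forall>s s'. (\<forall>j\<in>J. s j = s' j) \<longrightarrow>
                      glob (rescale A m t k) c s z = glob (rescale A m t k) c s' z)"
    by blast
qed

lemma unbloc_in_cfgs: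
  assumes "m \<ge> 1" and "\<And>z. length (c z) = m \<and> set (c z) \<subseteq> Q"
  shows "unbloc m c \<in> cfgs Q"
proof -
  have "unbloc m c y \<in> Q" for y
  proof -
    have "nat (y mod int m) < m" using assms(1) by (simp add: nat_less_iff)
    then have "c (y div int m) ! nat (y mod int m) \<in> set (c (y div int m))"
      using assms(2) by (intro nth_mem) auto
    then show ?thesis using assms(2) unfolding unbloc_def by blast
  qed
  then show ?thesis unfolding cfgs_def by blast
qed

lemma global_fun_in_cfgs:
  assumes "wf_sca A" "c \<in> cfgs (states A)" "s \<in> cfgs (rsyms A)"
  shows "global_fun A c s \<in> cfgs (states A)"
proof -
  have "rule A (map (\<lambda>v. c (z + v)) (nbhd A)) (map (\<lambda>v. s (z + v)) (rnbhd A)) \<in> states A" for z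
    using assms unfolding wf_sca_def cfgs_def by (elim conjE allE impE) auto
  then show ?thesis unfolding cfgs_def global_fun_def by auto
qed

lemma foldl_global_fun_in_cfgs:
  assumes "wf_sca A" "c \<in> cfgs (states A)" "\<forall>x\<in>set ss. x \<in> cfgs (rsyms A)"
  shows "foldl (global_fun A) c ss \<in> cfgs (states A)"
  using assms(2,3) by (induction ss arbitrary: c) (auto intro: global_fun_in_cfgs[OF assms(1)])

lemma grsyms_rescale_eq:
  "grsyms (rescale A m t k) = {ys. set ys \<subseteq> {y. set y \<subseteq> rsyms A \<and> length y = m} \<and> length ys = t}"
  unfolding rescale_def by auto

lemma card_grsyms_rescale:
  assumes "wf_sca A"
  shows "card (grsyms (rescale A m t k)) = (card (rsyms A) ^ m) ^ t"
  using assms unfolding wf_sca_def grsyms_rescale_eq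
  by (simp add: card_lists_length_eq finite_lists_length_eq)

lemma closed_gca_rescale:
  assumes A: "wf_sca A" and m: "m \<ge> 1"
  shows "closed_gca (rescale A m t k)"
  unfolding closed_gca_def
proof (intro ballI)
  fix c s assume c: "c \<in> cfgs (gstates (rescale A m t k))" and s: "s \<in> cfgs (grsyms (rescale A m t k))"
  have uc: "unbloc m c \<in> cfgs (states A)"
    using c m by (intro unbloc_in_cfgs) (auto simp: cfgs_def rescale_def)
  have "unbloc m (\<lambda>j. s j ! i) \<in> cfgs (rsyms A)" if i: "i < t" for i
  proof (rule unbloc_in_cfgs[OF m])
    fix z
    have "s z \<in> grsyms (rescale A m t k)" using s by (auto simp: cfgs_def)
    moreover from this have "s z ! i \<in> set (s z)" using i by (simp add: grsyms_rescale_eq)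
    ultimately show "length (s z ! i) = m \<and> set (s z ! i) \<subseteq> rsyms A"
      unfolding grsyms_rescale_eq by blast
  qed
  then have "iter_glob (global_fun A) (unbloc m c) (map (\<lambda>i. unbloc m (\<lambda>j. s j ! i)) [0..<t])
               \<in> cfgs (states A)"
    unfolding iter_glob_def by (intro foldl_global_fun_in_cfgs[OF A uc]) auto
  then show "glob (rescale A m t k) c s \<in> cfgs (gstates (rescale A m t k))"
    by (auto simp: rescale_def bloc_def shift_def cfgs_def)
qed

lemma finitary_rescale:
  assumes A: "wf_sca A" and m: "m \<ge> 1"
  shows "finitary_gca (rescale A m t k)"
proof -
  have QA: "finite (states A)" "finite (rsyms A)" "rsyms A \<noteq> {}"
    using A unfolding wf_sca_def by auto
  have "finite (gstates (rescale A m t k))"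
    using finite_lists_length_eq[OF QA(1), of m] unfolding rescale_def by (simp add: conj_commute)
  moreover have "finite (grsyms (rescale A m t k))"
    unfolding grsyms_rescale_eq by (intro finite_lists_length_eq QA)
  moreover obtain r0 where "r0 \<in> rsyms A" using QA by auto
  then have "replicate t (replicate m r0) \<in> grsyms (rescale A m t k)"
    unfolding grsyms_rescale_eq by auto
  ultimately show ?thesis
    unfolding finitary_gca_def using closed_gca_rescale[OF A m] local_gca_rescale[OF m] by blast
qed

lemma grsyms_restr [simp]: "grsyms (restr G Q' i) = grsyms G"
  by (simp add: restr_def)

lemma grsyms_proj [simp]: "grsyms (proj G p) = grsyms G"
  by (simp add: proj_def)

lemma finitary_restr:
  assumes G: "finitary_gca G" and i: "is_restr G Q' i"
  shows "finitary_gca (restr G Q' i)"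
proof -
  have "finite Q'"
    using assms unfolding finitary_gca_def is_restr_def by (metis finite_imageD finite_subset)
  moreover have "closed_gca (restr G Q' i)"
    unfolding closed_gca_def
  proof (intro ballI)
    fix c s assume c: "c \<in> cfgs (gstates (restr G Q' i))" and s: "s \<in> cfgs (grsyms (restr G Q' i))"
    have "i \<circ> c \<in> cfgs (i ` Q')" using c by (auto simp: cfgs_def restr_def)
    then have "glob G (i \<circ> c) s \<in> cfgs (i ` Q')"
      using i s unfolding is_restr_def by (auto simp: restr_def)
    have "the_inv_into Q' i (glob G (i \<circ> c) s z) \<in> Q'" for z
    proof -
      obtain q where "q \<in> Q'" "glob G (i \<circ> c) s z = i q"
        using \<open>glob G (i \<circ> c) s \<in> cfgs (i ` Q')\<close> by (auto simp: cfgs_def)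
      then show ?thesis using i the_inv_into_f_f[of i Q' q] unfolding is_restr_def by simp
    qed
    then show "glob (restr G Q' i) c s \<in> cfgs (gstates (restr G Q' i))"
      by (auto simp: restr_def cfgs_def)
  qed
  moreover have "local_gca (restr G Q' i)"
    using G unfolding finitary_gca_def
    by (intro local_gca_comp[where \<phi> = "the_inv_into Q' i" and g = "\<lambda>c. i \<circ> c"]) (simp_all add: restr_def)
  ultimately show ?thesis using G unfolding finitary_gca_def by (simp add: restr_def)
qed

lemma cfgs_image_lift:
  assumes "c' \<in> cfgs (p ` Q)"
  shows "\<exists>c. c \<in> cfgs Q \<and> p \<circ> c = c'"
proof -
  have "\<forall>z. \<exists>q. q \<in> Q \<and> p q = c' z"
    using assms unfolding cfgs_def by (metis image_iff mem_Collect_eq)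
  then obtain f where "\<forall>z. f z \<in> Q \<and> p (f z) = c' z" by metis
  then show ?thesis unfolding cfgs_def by (intro exI[of _ f]) auto
qed

lemma finitary_proj:
  assumes G: "finitary_gca G"
  shows "finitary_gca (proj G p)"
proof -
  have "closed_gca (proj G p)"
    unfolding closed_gca_def
  proof (intro ballI)
    fix c' s assume c': "c' \<in> cfgs (gstates (proj G p))" and s: "s \<in> cfgs (grsyms (proj G p))"
    define c where "c = (SOME c. c \<in> cfgs (gstates G) \<and> p \<circ> c = c')"
    have "c \<in> cfgs (gstates G)"
      unfolding c_def using someI_ex[OF cfgs_image_lift] c' by (auto simp: proj_def)
    then have "glob G c s \<in> cfgs (gstates G)"
      using G s unfolding finitary_gca_def closed_gca_def by (auto simp: proj_def)
    then show "glob (proj G p) c' s \<in> cfgs (gstates (proj G p))"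
      by (auto simp: proj_def cfgs_def c_def)
  qed
  moreover have "local_gca (proj G p)"
    using G unfolding finitary_gca_def
    by (intro local_gca_comp[where \<phi> = p and g = "\<lambda>c'. SOME c. c \<in> cfgs (gstates G) \<and> p \<circ> c = c'"])
       (simp_all add: proj_def)
  ultimately show ?thesis using G unfolding finitary_gca_def by (simp add: proj_def)
qed

section \<open>Probabilities of single-cell events\<close>

definition cell0_event :: "'q set \<Rightarrow> 'q \<Rightarrow> (int \<Rightarrow> 'q) set" where
  "cell0_event Q w = {x \<in> space (PiM UNIV (\<lambda>_. count_space Q)). x 0 = w}"

lemma glob_measurable:
  assumes G: "finitary_gca G" and c: "c \<in> cfgs (gstates G)"
  shows "glob G c \<in> measurable (bernoulli_meas (grsyms G)) (PiM UNIV (\<lambda>_. count_space (gstates G)))"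
proof -
  let ?R = "grsyms G" and ?Q = "gstates G"
  have g: "finite ?Q" "finite ?R" "?R \<noteq> {}" "closed_gca G" "local_gca G"
    using G unfolding finitary_gca_def by auto
  have cl: "glob G c s z \<in> ?Q" if "s \<in> space (bernoulli_meas ?R)" for s z
    using g(4) c that unfolding closed_gca_def by (auto simp: space_bernoulli_meas cfgs_def)
  have "(\<lambda>s z. glob G c s z) \<in> measurable (bernoulli_meas ?R) (PiM UNIV (\<lambda>_. count_space ?Q))"
  proof (rule measurable_PiM_single')
    fix z :: int
    obtain J where J: "finite J" "\<forall>s s'. (\<forall>j\<in>J. s j = s' j) \<longrightarrow> glob G c s z = glob G c s' z"
      using g(5) unfolding local_gca_def by blast
    have "(\<lambda>s. glob G c s z) -` {a} \<inter> space (bernoulli_meas ?R) \<in> sets (bernoulli_meas ?R)" for a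
      using J(2) by (intro bernoulli_meas_cylinder(1)[OF g(2,3) J(1)]) auto
    then show "(\<lambda>s. glob G c s z) \<in> measurable (bernoulli_meas ?R) (count_space ?Q)"
      unfolding measurable_count_space_eq2[OF g(1)] using cl by auto
  qed (use cl in auto)
  then show ?thesis by simp
qed

lemma measure_stoch_cell0_event:
  assumes G: "finitary_gca G" and c: "c \<in> cfgs (gstates G)"
  shows "measure (stoch G c) (cell0_event (gstates G) w) =
           measure (bernoulli_meas (grsyms G)) {s \<in> space (bernoulli_meas (grsyms G)). glob G c s 0 = w}"
proof -
  let ?M = "bernoulli_meas (grsyms G)" and ?N = "PiM UNIV (\<lambda>_::int. count_space (gstates G))"
  have meas: "glob G c \<in> measurable ?M ?N" by (rule glob_measurable[OF G c])
  have "cell0_event (gstates G) w = (\<lambda>x. x 0) -` ({w} \<inter> gstates G) \<inter> space ?N"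
    by (auto simp: cell0_event_def space_PiM)
  also have "\<dots> \<in> sets ?N"
    by (rule measurable_sets[OF measurable_component_singleton]) auto
  finally have E: "cell0_event (gstates G) w \<in> sets ?N" .
  have "glob G c -` cell0_event (gstates G) w \<inter> space ?M = {s \<in> space ?M. glob G c s 0 = w}"
    using measurable_space[OF meas] by (auto simp: cell0_event_def)
  then show ?thesis
    unfolding stoch_def by (simp add: measure_distr[OF meas E])
qed

lemma stoch_cell0_event_fraction:
  assumes G: "finitary_gca G" and c: "c \<in> cfgs (gstates G)"
  shows "\<exists>a N. measure (stoch G c) (cell0_event (gstates G) w) = real a / real (card (grsyms G)) ^ N"
proof -
  have R: "finite (grsyms G)" "grsyms G \<noteq> {}" using G unfolding finitary_gca_def by auto
  obtain J where J: "finite J" "\<forall>s s'. (\<forall>j\<in>J. s j = s' j) \<longrightarrow> glob G c s 0 = glob G c s' 0"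
    using G unfolding finitary_gca_def local_gca_def by blast
  let ?S = "{s \<in> space (bernoulli_meas (grsyms G)). glob G c s 0 = w}"
  have "measure (bernoulli_meas (grsyms G)) ?S =
          real (card ((\<lambda>s. restrict s J) ` ?S)) / real (card (grsyms G)) ^ card J"
    by (rule bernoulli_meas_cylinder(2)[OF R J(1)]) (use J(2) in auto)
  then show ?thesis
    unfolding measure_stoch_cell0_event[OF G c] by blast
qed

lemma fraction_coprime_power_denominators_Ints:
  fixes a b n n' :: nat
  assumes "coprime n n'" "0 < n" "0 < n'" "real a / real n ^ L = real b / real n' ^ N"
  shows "real a / real n ^ L \<in> \<int>"
proof -
  have "real (a * n' ^ N) = real (b * n ^ L)"
    using assms(2-4) by (simp add: field_simps)
  then have "n ^ L dvd a * n' ^ N" by (metis dvd_triv_right of_nat_eq_iff)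
  then have "n ^ L dvd a" using assms(1) by (simp add: coprime_dvd_mult_left_iff)
  then obtain q where "a = n ^ L * q" by blast
  then show ?thesis using assms(2) by simp
qed

section \<open>A stochastic CA with \<open>r + 1\<close> random symbols\<close>

definition noise_sca :: "nat \<Rightarrow> (nat, nat) sca" where
  "noise_sca r = \<lparr>states = {..<Suc r}, rsyms = {..<Suc r}, nbhd = [], rnbhd = [0],
                   rule = (\<lambda>xs ys. hd ys)\<rparr>"

lemma wf_noise_sca: "wf_sca (noise_sca r)"
  unfolding wf_sca_def noise_sca_def by (auto simp: length_Suc_conv)

lemma global_fun_noise_sca: "global_fun (noise_sca r) = (\<lambda>c s. s)"
  by (auto simp: global_fun_def noise_sca_def intro!: ext)

lemma glob_rescale_noise_sca_const:
  assumes m: "m \<ge> 1" and t: "t \<ge> 1"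
  shows "glob (rescale (noise_sca r) m t k) c (\<lambda>_. replicate t (replicate m a)) z = replicate m a"
proof -
  have const: "unbloc m (\<lambda>j. replicate t (replicate m a) ! i) = (\<lambda>_. a)" if "i < t" for i
    using that m by (auto simp: unbloc_def nat_less_iff)
  have foldl_last: "foldl (\<lambda>c s. s) c xs = last xs" if "xs \<noteq> []" for c :: "int \<Rightarrow> nat" and xs
    using that by (induction xs arbitrary: c) auto
  let ?ss = "map (\<lambda>i. unbloc m (\<lambda>j. replicate t (replicate m a) ! i)) [0..<t]"
  have "last ?ss = (\<lambda>_. a)"
    using t const[of "t - 1"] by (simp add: last_map)
  then have "iter_glob (global_fun (noise_sca r)) (unbloc m c) ?ss = (\<lambda>_. a)"
    unfolding iter_glob_def global_fun_noise_sca using foldl_last t by simp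
  then show ?thesis by (simp add: rescale_def bloc_def shift_def map_replicate_const)
qed

lemma stoch_rescale_noise_sca_strict:
  assumes r: "r \<ge> 1" and m: "m \<ge> 1" and t: "t \<ge> 1"
    and c: "c \<in> cfgs (gstates (rescale (noise_sca r) m t k))"
  defines "P \<equiv> measure (stoch (rescale (noise_sca r) m t k) c)
                  (cell0_event (gstates (rescale (noise_sca r) m t k)) (replicate m 0))"
  shows "0 < P" and "P < 1"
proof -
  define G where "G = rescale (noise_sca r) m t k"
  define R where "R = grsyms G"
  define S where "S = {s \<in> space (bernoulli_meas R). glob G c s 0 = replicate m 0}"
  define s\<^sub>a :: "nat \<Rightarrow> int \<Rightarrow> nat list list" where "s\<^sub>a a = (\<lambda>_. replicate t (replicate m a))" for a
  have G: "finitary_gca G" unfolding G_def by (rule finitary_rescale[OF wf_noise_sca m])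
  have R: "finite R" "R \<noteq> {}" using G unfolding finitary_gca_def R_def by auto
  obtain J where J: "finite J" "\<forall>s s'. (\<forall>j\<in>J. s j = s' j) \<longrightarrow> glob G c s 0 = glob G c s' 0"
    using G unfolding finitary_gca_def local_gca_def by blast
  have P: "P = measure (bernoulli_meas R) S"
    unfolding P_def G_def[symmetric] S_def R_def
    by (rule measure_stoch_cell0_event[OF G c[folded G_def]])
  have sp: "s\<^sub>a a \<in> space (bernoulli_meas R)" if "a \<le> r" for a
    using that by (auto simp: space_bernoulli_meas s\<^sub>a_def R_def G_def rescale_def noise_sca_def)
  have glob_s: "glob G c (s\<^sub>a a) 0 = replicate m a" for a
    unfolding G_def s\<^sub>a_def by (rule glob_rescale_noise_sca_const[OF m t])
  have "replicate m (1::nat) \<noteq> replicate m 0" using m by (cases m) auto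
  then have "s\<^sub>a 0 \<in> S" "s\<^sub>a 1 \<in> space (bernoulli_meas R) - S"
    using sp r glob_s unfolding S_def by auto
  moreover have "s' \<in> S" if "s \<in> S" "s' \<in> space (bernoulli_meas R)" "\<forall>j\<in>J. s j = s' j" for s s'
    using that J(2) unfolding S_def by (metis (mono_tags, lifting) mem_Collect_eq)
  ultimately show "0 < P" "P < 1"
    unfolding P using bernoulli_meas_cylinder_strict[OF R J(1), of S] S_def by auto
qed

lemma not_same_stoch_rescale_noise_sca:
  assumes G: "finitary_gca G" and cop: "coprime (Suc r) (card (grsyms G))"
    and r: "r \<ge> 1" and m: "m \<ge> 1" and t: "t \<ge> 1"
  shows "\<not> same_stoch (rescale (noise_sca r) m t k) G"
proof
  define GB where "GB = rescale (noise_sca r) m t k"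
  assume "same_stoch (rescale (noise_sca r) m t k) G"
  then have same: "gstates GB = gstates G" "\<forall>c \<in> cfgs (gstates GB). stoch GB c = stoch G c"
    unfolding same_stoch_def GB_def by auto
  define c :: "int \<Rightarrow> nat list" where "c = (\<lambda>_. replicate m 0)"
  have c: "c \<in> cfgs (gstates GB)"
    by (auto simp: c_def GB_def rescale_def noise_sca_def cfgs_def)
  define P where "P = measure (stoch GB c) (cell0_event (gstates GB) (replicate m 0))"
  have GB: "finitary_gca GB" unfolding GB_def by (rule finitary_rescale[OF wf_noise_sca m])
  obtain a L where a: "P = real a / real (card (grsyms GB)) ^ L"
    unfolding P_def using stoch_cell0_event_fraction[OF GB c] by blast
  have P_G: "P = measure (stoch G c) (cell0_event (gstates G) (replicate m 0))"
    unfolding P_def using same c by simp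
  have "c \<in> cfgs (gstates G)" using c same(1) by simp
  then obtain b N where b: "P = real b / real (card (grsyms G)) ^ N"
    using stoch_cell0_event_fraction[OF G] unfolding P_G by blast
  have "card (grsyms GB) = (Suc r ^ m) ^ t"
    unfolding GB_def card_grsyms_rescale[OF wf_noise_sca] by (simp add: noise_sca_def)
  moreover have "0 < card (grsyms G)"
    using G unfolding finitary_gca_def by (simp add: card_gt_0_iff)
  ultimately have "P \<in> \<int>"
    using a b cop fraction_coprime_power_denominators_Ints[of "card (grsyms GB)" "card (grsyms G)" a L b N]
    by simp
  moreover have "0 < P" "P < 1"
    using stoch_rescale_noise_sca_strict[OF r m t c[unfolded GB_def]] unfolding P_def GB_def by auto
  ultimately obtain n :: int where "P = of_int n" "0 < P" "P < 1" by (auto elim!: Ints_cases)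
  then show False by simp
qed

lemma not_same_stoch_noise_sca_of_rescale:
  assumes U: "wf_sca U" and G: "finitary_gca G" "grsyms G = grsyms (rescale U m' t' k')"
    and m: "m \<ge> 1" and t: "t \<ge> 1"
  shows "\<not> same_stoch (rescale (noise_sca (card (rsyms U))) m t k) G"
proof (rule not_same_stoch_rescale_noise_sca[OF G(1) _ _ m t])
  show "coprime (Suc (card (rsyms U))) (card (grsyms G))"
    unfolding G(2) card_grsyms_rescale[OF U] by simp
  show "card (rsyms U) \<ge> 1"
    using U unfolding wf_sca_def by (simp add: Suc_le_eq card_gt_0_iff)
qed

lemma not_sim_i_noise_sca:
  assumes U: "wf_sca U"
  shows "\<not> sim_i (noise_sca (card (rsyms U))) U"
proof
  assume "sim_i (noise_sca (card (rsyms U))) U"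
  then obtain m1 m2 t1 t2 k1 k2 Q' i where h: "m1 \<ge> 1" "m2 \<ge> 1" "t1 \<ge> 1"
    "is_restr (rescale U m2 t2 k2) Q' i"
    "same_stoch (rescale (noise_sca (card (rsyms U))) m1 t1 k1) (restr (rescale U m2 t2 k2) Q' i)"
    unfolding sim_i_def by blast
  show False
    by (rule not_same_stoch_noise_sca_of_rescale[OF U finitary_restr[OF finitary_rescale[OF U h(2)] h(4)]
          _ h(1,3), THEN notE])
       (use h(5) in simp_all)
qed

lemma not_sim_pi_noise_sca:
  assumes U: "wf_sca U"
  shows "\<not> sim_pi (noise_sca (card (rsyms U))) U"
proof
  assume "sim_pi (noise_sca (card (rsyms U))) U"
  then obtain m1 m2 t1 t2 k1 k2 p where h: "m1 \<ge> 1" "m2 \<ge> 1" "t1 \<ge> 1"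
    "same_stoch (rescale (noise_sca (card (rsyms U))) m1 t1 k1) (proj (rescale U m2 t2 k2) p)"
    unfolding sim_pi_def by blast
  show False
    by (rule not_same_stoch_noise_sca_of_rescale[OF U finitary_proj[OF finitary_rescale[OF U h(2)]]
          _ h(1,3), THEN notE])
       (use h(4) in simp_all)
qed

lemma not_sim_m_noise_sca:
  fixes U :: "('q, 'r) sca"
  assumes U: "wf_sca U"
  shows "\<not> sim_m (noise_sca (card (rsyms U))) U"
proof
  assume "sim_m (noise_sca (card (rsyms U))) U"
  then obtain m1 m2 t1 t2 k1 k2 and Q' :: "'q list set" and i p where h: "m1 \<ge> 1" "m2 \<ge> 1" "t1 \<ge> 1"
    "is_restr (rescale U m2 t2 k2) Q' i"
    "same_stoch (rescale (noise_sca (card (rsyms U))) m1 t1 k1) (proj (restr (rescale U m2 t2 k2) Q' i) p)"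
    unfolding sim_m_def by blast
  show False
    by (rule not_same_stoch_noise_sca_of_rescale[OF U
          finitary_proj[OF finitary_restr[OF finitary_rescale[OF U h(2)] h(4)]] _ h(1,3), THEN notE])
       (use h(5) in simp_all)
qed

theorem corollary1:
  fixes U :: "('q, 'r) sca"
  assumes "wf_sca U"
  shows "(\<exists>B :: (nat, nat) sca. wf_sca B \<and> \<not> sim_i B U) \<and>
         (\<exists>B :: (nat, nat) sca. wf_sca B \<and> \<not> sim_pi B U) \<and>
         (\<exists>B :: (nat, nat) sca. wf_sca B \<and> \<not> sim_m B U)"
  using wf_noise_sca not_sim_i_noise_sca[OF assms] not_sim_pi_noise_sca[OF assms]
    not_sim_m_noise_sca[OF assms]
  by blast

end
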